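(* Let $\mathcal H$ be a finite-dimensional Hilbert space, $\mathcal D$ the set of density operators on $\mathcal H$, and consider the two-time-scale Lindblad equation $\frac{d\rho}{dt} = (\mathcal L_0 + \epsilon \mathcal L_1)\rho$, where $\mathcal L_0$ is a Lindblad super-operator and $\epsilon>0$ is small. Assume that for $\epsilon=0$ the dynamics converge to a stationary regime, i.e. the limit $U_0\rho := \lim_{t\to\infty} e^{t\mathcal L_0}\rho$ exists for all $\rho\in\mathcal D$, and write it in Kraus form $U_0\rho = \sum_\mu M_\mu \rho M_\mu^\dagger$ with $\sum_\mu M_\mu^\dagger M_\mu = \mathbb I_{\mathcal H}$. Assume that the set of steady states $\mathcal D_0 = \{\rho\in\mathcal D : \mathcal L_0\rho = 0\}$ coincides with the set of density operators supported on a subspace $\mathcal H_0\subseteq\mathcal H$. Let $\{|n\rangle\}_{n=1}^{\dim\mathcal H_0}$ be an orthonormal basis of $\mathcal H_0$, $P_n = |n\rangle\langle n|$, $P_0=\sum_n P_n$, and assume $$\mathcal L_1\rho = \sum_{n=1}^{\dim \mathcal H_0}\Big(P_n\rho P_n^\dagger - \tfrac12 P_n^\dagger P_n\rho - \tfrac12 \rho P_n^\dagger P_n\Big).$$ Then the first-order (in $\epsilon$) effective dynamics of $\rho_e\in\mathcal D_0$ obtained by adiabatic elimination — i.e. $\frac{d\rho_e}{dt} = (\mathcal L_{e,0}+\epsilon\mathcal L_{e,1})\rho_e + O(\epsilon^2)$, where $\mathcal L_{e,0}=0$ and $\mathcal L_{e,1}\rho_e = K_0\big(U_0\mathcal L_1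 K_0(\rho_e)\big)$ with $K_0(\rho)=P_0\rho P_0$ — is the Lindblad equation $$\frac{d\rho_e}{dt} = \epsilon\sum_{n,m=1}^{\dim\mathcal H_0}\kappa_{nm}\Big(R_{nm}\rho_e R_{nm}^\dagger - \tfrac12 R_{nm}^\dagger R_{nm}\rho_e - \tfrac12\rho_e R_{nm}^\dagger R_{nm}\Big),$$ where $R_{nm} = |n\rangle\langle m|$ and $\kappa_{nm} = \sum_\mu |\langle n|M_\mu|m\rangle|^2$.
   Context: A Lindblad super-operator has the form $\mathcal L\rho = -i[H,\rho]+\sum_k D_{R_k}[\rho]$ with $H$ Hermitian and dissipator $D_R[\rho] = R\rho R^\dagger - \tfrac12(R^\dagger R\rho+\rho R^\dagger R)$. The adiabatic elimination framework: one seeks a map $\rho = K(\rho_e)=\sum_{m\ge0}\epsilon^m K_m(\rho_e)$ and an effective generator $\mathcal L_e = \mathcal L_{e,0}+\epsilon\mathcal L_{e,1}+O(\epsilon^2)$ with $(\mathcal L_0+\epsilon\mathcal L_1)K(\rho_e) = K(\mathcal L_e\rho_e)$, where $K_0$ is the projection onto $\mathcal D_0$ given by $K_0(\rho)=P_0\rho P_0$. *)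

theory Defs
  imports "HOL-Analysis.Analysis"
begin

text \<open>Operators on a finite-dimensional Hilbert space H = complex^'n are
  matrices of type complex^'n^'n.\<close>

type_synonym 'n cop = "complex^'n^'n"

definition adj :: "'n::finite cop \<Rightarrow> 'n cop" where
  "adj A = (\<chi> i j. cnj (A $ j $ i))"

definition cscale :: "complex \<Rightarrow> 'n::finite cop \<Rightarrow> 'n cop" where
  "cscale c A = (\<chi> i j. c * A $ i $ j)"

text \<open>Inner product, antilinear in the first argument: cinner v w = <v|w>.\<close>
definition cinner :: "complex^'n::finite \<Rightarrow> complex^'n \<Rightarrow> complex" where
  "cinner v w = (\<Sum>i\<in>UNIV. cnj (v $ i) * w $ i)"

definition outer :: "complex^'n::finite \<Rightarrow> complex^'n \<Rightarrow> 'n cop" where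
  "outer v w = (\<chi> i j. v $ i * cnj (w $ j))"

definition hermitian :: "'n::finite cop \<Rightarrow> bool" where
  "hermitian A \<longleftrightarrow> adj A = A"

definition psd :: "'n::finite cop \<Rightarrow> bool" where
  "psd A \<longleftrightarrow> (\<forall>v. Im (cinner v (A *v v)) = 0 \<and> Re (cinner v (A *v v)) \<ge> 0)"

definition density_ops :: "'n::finite cop set" where
  "density_ops = {\<rho>. hermitian \<rho> \<and> psd \<rho> \<and> trace \<rho> = 1}"

definition dissip :: "'n::finite cop \<Rightarrow> 'n cop \<Rightarrow> 'n cop" where
  "dissip R \<rho> = R ** \<rho> ** adj R
      - cscale (1/2) (adj R ** R ** \<rho> + \<rho> ** adj R ** R)"

definition lindblad :: "'n::finite cop \<Rightarrow> 'n cop list \<Rightarrow> 'n cop \<Rightarrow> 'n cop" where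
  "lindblad H Rs \<rho> = cscale (-\<i>) (H ** \<rho> - \<rho> ** H) + (\<Sum>R\<leftarrow>Rs. dissip R \<rho>)"

definition is_lindblad :: "('n::finite cop \<Rightarrow> 'n cop) \<Rightarrow> bool" where
  "is_lindblad L \<longleftrightarrow> (\<exists>H Rs. hermitian H \<and> (\<forall>\<rho>. L \<rho> = lindblad H Rs \<rho>))"

definition evol :: "('n::finite cop \<Rightarrow> 'n cop) \<Rightarrow> real \<Rightarrow> 'n cop \<Rightarrow> 'n cop" where
  "evol L t \<rho> = (\<Sum>k. (t ^ k / fact k) *\<^sub>R (L ^^ k) \<rho>)"

definition kraus :: "'i set \<Rightarrow> ('i \<Rightarrow> 'n::finite cop) \<Rightarrow> 'n cop \<Rightarrow> 'n cop" where
  "kraus I M \<rho> = (\<Sum>\<mu>\<in>I. M \<mu> ** \<rho> ** adj (M \<mu>))"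

definition cspan_basis :: "(nat \<Rightarrow> complex^'n::finite) \<Rightarrow> nat \<Rightarrow> (complex^'n) set" where
  "cspan_basis e d = {v. \<exists>c. v = (\<Sum>k<d. (\<chi> i. c k * e k $ i))}"

text \<open>An operator supported on a subspace S: its range lies in S (and, being
  Hermitian for density operators, it then vanishes on the orthogonal complement).\<close>
definition supported_on :: "'n::finite cop \<Rightarrow> (complex^'n) set \<Rightarrow> bool" where
  "supported_on \<rho> S \<longleftrightarrow> (\<forall>v. \<rho> *v v \<in> S)"

end

theory Submission
  imports Defs
begin

(* Each projector |n><n| onto a basis vector of H_0 is itself a steady state, and the limit map
   U_0 fixes every steady state; hence kappa_nm = <n|U_0(|m><m|)|n> = delta_nm and the right-hand
   side is sum_n D_{P_n}[rho_e].  For rho_e supported on H_0 this equals the dephased state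
   sum_n P_n rho_e P_n minus rho_e, a combination of steady states and thus fixed by U_0 and K_0. *)

lemma cscale_add: "cscale c (A + B) = cscale c A + cscale c B"
  by (simp add: cscale_def vec_eq_iff algebra_simps)

lemma cscale_0_left [simp]: "cscale 0 A = 0"
  by (simp add: cscale_def vec_eq_iff)

lemma cscale_0_right [simp]: "cscale c 0 = 0"
  by (simp add: cscale_def vec_eq_iff)

lemma cscale_1_left [simp]: "cscale 1 A = A"
  by (simp add: cscale_def vec_eq_iff)

lemma cscale_sum: "cscale c (\<Sum>i\<in>S. f i) = (\<Sum>i\<in>S. cscale c (f i))"
  by (induction S rule: infinite_finite_induct) (auto simp: cscale_add)

lemma cscale_half_double: "cscale (1/2) (A + A) = A"
  by (simp add: cscale_def vec_eq_iff)

lemma cscale_matrix_mult_left: "cscale c A ** B = cscale c (A ** B)"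
  by (simp add: cscale_def vec_eq_iff matrix_matrix_mult_def sum_distrib_left mult.assoc)

lemma cscale_matrix_mult_right: "A ** cscale c B = cscale c (A ** B)"
  by (simp add: cscale_def vec_eq_iff matrix_matrix_mult_def sum_distrib_left mult.left_commute)

lemma matrix_diff_ldistrib: "A ** (B - C) = A ** B - A ** (C :: 'a::ring_1^'n^'n)"
  by (simp add: vec_eq_iff matrix_matrix_mult_def sum_subtractf algebra_simps)

lemma matrix_diff_rdistrib: "(B - C) ** A = B ** A - C ** (A :: 'a::ring_1^'n^'n)"
  by (simp add: vec_eq_iff matrix_matrix_mult_def sum_subtractf algebra_simps)

lemma matrix_add_rdistrib:
  fixes A :: "'a::semiring_1^'p^'m" and B C :: "'a^'m^'n"
  shows "(B + C) ** A = B ** A + C ** A"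
  by (simp add: vec_eq_iff matrix_matrix_mult_def sum.distrib algebra_simps)

lemma matrix_sum_ldistrib:
  fixes A :: "'a::semiring_1^'m^'n" and f :: "'i \<Rightarrow> 'a^'p^'m"
  shows "A ** (\<Sum>i\<in>S. f i) = (\<Sum>i\<in>S. A ** f i)"
  by (induction S rule: infinite_finite_induct) (auto simp: matrix_add_ldistrib)

lemma matrix_sum_rdistrib:
  fixes A :: "'a::semiring_1^'p^'m" and f :: "'i \<Rightarrow> 'a^'m^'n"
  shows "(\<Sum>i\<in>S. f i) ** A = (\<Sum>i\<in>S. f i ** A)"
  by (induction S rule: infinite_finite_induct) (auto simp: matrix_add_rdistrib)

lemma matrix_vector_mult_sum_left:
  fixes f :: "'i \<Rightarrow> 'a::semiring_1^'m^'n"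
  shows "(\<Sum>i\<in>S. f i) *v w = (\<Sum>i\<in>S. f i *v w)"
  by (induction S rule: infinite_finite_induct) (auto simp: matrix_vector_mult_add_rdistrib)

lemma cinner_sum_right: "cinner v (\<Sum>k\<in>S. f k) = (\<Sum>k\<in>S. cinner v (f k))"
  unfolding cinner_def by (simp add: sum_distrib_left sum.swap[of _ S])

lemma cinner_scale_right: "cinner v (\<chi> i. c * w $ i) = c * cinner v w"
  unfolding cinner_def by (simp add: sum_distrib_left algebra_simps)

lemma cinner_commute: "cinner v w = cnj (cinner w v)"
  by (simp add: cinner_def mult.commute)

lemma adj_add: "adj (A + B) = adj A + adj B"
  by (simp add: adj_def vec_eq_iff)

lemma adj_sum: "adj (\<Sum>i\<in>S. f i) = (\<Sum>i\<in>S. adj (f i))"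
  by (induction S rule: infinite_finite_induct) (auto simp: adj_add adj_def vec_eq_iff)

lemma adj_matrix_mult: "adj (A ** B) = adj B ** adj A"
  by (simp add: adj_def vec_eq_iff matrix_matrix_mult_def mult.commute)

lemma adj_outer: "adj (outer v w) = outer w v"
  by (simp add: adj_def outer_def vec_eq_iff)

lemma outer_mult_outer: "outer a b ** outer c d = cscale (cinner b c) (outer a d)"
  by (simp add: outer_def cscale_def cinner_def vec_eq_iff matrix_matrix_mult_def
      sum_distrib_left sum_distrib_right algebra_simps)

lemma outer_sandwich: "outer a b ** A ** outer c d = cscale (cinner b (A *v c)) (outer a d)"
  by (simp add: outer_def cscale_def cinner_def vec_eq_iff matrix_matrix_mult_def
      matrix_vector_mult_def sum_distrib_left sum_distrib_right algebra_simps)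
    (use sum.swap in fastforce)

lemma outer_mult_vector: "outer a b *v v = (\<chi> i. cinner b v * a $ i)"
  by (simp add: outer_def cinner_def vec_eq_iff matrix_vector_mult_def sum_distrib_left
      sum_distrib_right algebra_simps)

lemma matrix_mult_outer: "A ** outer a b = outer (A *v a) b"
  by (simp add: outer_def vec_eq_iff matrix_matrix_mult_def matrix_vector_mult_def
      sum_distrib_right mult.assoc)

lemma outer_mult_adj: "outer a b ** adj A = outer a (A *v b)"
  by (simp add: outer_def adj_def vec_eq_iff matrix_matrix_mult_def matrix_vector_mult_def
      sum_distrib_left mult_ac)

lemma cinner_outer_self: "cinner w (outer v v *v w) = cinner w v * cnj (cinner w v)"
proof -
  have "cinner w (outer v v *v w) = cinner v w * cinner w v"
    by (simp add: outer_mult_vector cinner_scale_right)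
  then show ?thesis by (simp add: cinner_commute[of v w] mult.commute)
qed

lemma sum_kronecker_cscale:
  fixes d :: nat
  assumes "\<And>n m. n < d \<Longrightarrow> m < d \<Longrightarrow> c n m = (if n = m then 1 else 0)"
  shows "(\<Sum>n<d. \<Sum>m<d. cscale (c n m) (F n m)) = (\<Sum>n<d. F n n)"
proof (rule sum.cong)
  fix n assume "n \<in> {..<d}"
  then have "(\<Sum>m<d. cscale (c n m) (F n m)) = (\<Sum>m<d. if m = n then F n m else 0)"
    using assms by (intro sum.cong) auto
  also have "\<dots> = F n n" using \<open>n \<in> {..<d}\<close> by (subst sum.delta) auto
  finally show "(\<Sum>m<d. cscale (c n m) (F n m)) = F n n" .
qed simp

lemma dissip_split:
  "dissip R \<rho> = R ** \<rho> ** adj R - cscale (1/2) (adj R ** R ** \<rho>) - cscale (1/2) (\<rho> ** adj R ** R)"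
  by (simp add: dissip_def cscale_add)

lemma dissip_projection:
  assumes "adj P = P" and "P ** P = P"
  shows "dissip P \<rho> = P ** \<rho> ** P - cscale (1/2) (P ** \<rho> + \<rho> ** P)"
  by (simp add: dissip_def assms matrix_mul_assoc[symmetric])

lemma kraus_diff: "kraus I M (A - B) = kraus I M A - kraus I M B"
  by (simp add: kraus_def matrix_diff_ldistrib matrix_diff_rdistrib sum_subtractf)

lemma kraus_cscale: "kraus I M (cscale c A) = cscale c (kraus I M A)"
  by (simp add: kraus_def cscale_matrix_mult_left cscale_matrix_mult_right cscale_sum)

lemma kraus_sum: "kraus I M (\<Sum>i\<in>S. f i) = (\<Sum>i\<in>S. kraus I M (f i))"
  by (induction S rule: infinite_finite_induct)
    (simp_all add: kraus_def matrix_add_ldistrib matrix_add_rdistrib sum.distrib)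

lemma kraus_outer_diagonal:
  "complex_of_real (\<Sum>\<mu>\<in>I. (cmod (cinner w (M \<mu> *v v)))\<^sup>2) = cinner w (kraus I M (outer v v) *v w)"
proof -
  have "complex_of_real (\<Sum>\<mu>\<in>I. (cmod (cinner w (M \<mu> *v v)))\<^sup>2)
      = (\<Sum>\<mu>\<in>I. cinner w (M \<mu> *v v) * cnj (cinner w (M \<mu> *v v)))"
    by (simp only: of_real_sum complex_norm_square)
  also have "\<dots> = cinner w (kraus I M (outer v v) *v w)"
    unfolding kraus_def matrix_vector_mult_sum_left cinner_sum_right
    by (rule sum.cong) (simp_all add: matrix_mult_outer outer_mult_adj cinner_outer_self)
  finally show ?thesis .
qed

lemma lindblad_zero:
  assumes "is_lindblad L"
  shows "L 0 = 0"
proof -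
  obtain H Rs where "\<forall>\<rho>. L \<rho> = lindblad H Rs \<rho>"
    using assms unfolding is_lindblad_def by blast
  then show ?thesis by (simp add: lindblad_def dissip_def)
qed

lemma evol_fixed_point:
  assumes "L 0 = 0" and "L \<rho> = 0"
  shows "evol L t \<rho> = \<rho>"
proof -
  have "(L ^^ k) \<rho> = (if k = 0 then \<rho> else 0)" for k
    by (induction k) (auto simp: assms)
  then have "(\<lambda>k. (t ^ k / fact k) *\<^sub>R (L ^^ k) \<rho>) = (\<lambda>k. if k = 0 then \<rho> else 0)"
    by auto
  moreover have "(\<lambda>k. if k = 0 then \<rho> else 0) sums \<rho>"
    using sums_single[of 0 "\<lambda>_. \<rho>"] by simp
  ultimately show ?thesis unfolding evol_def by (simp add: sums_iff)
qed

lemma limit_kraus_fixes_steady_state: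
  assumes "is_lindblad L"
    and "((\<lambda>t. evol L t \<rho>) \<longlongrightarrow> kraus I M \<rho>) at_top"
    and "L \<rho> = 0"
  shows "kraus I M \<rho> = \<rho>"
proof -
  have "((\<lambda>t::real. evol L t \<rho>) \<longlongrightarrow> \<rho>) at_top"
    using evol_fixed_point[OF lindblad_zero[OF assms(1)] assms(3)] by simp
  with assms(2) show ?thesis by (metis tendsto_unique trivial_limit_at_top_linorder)
qed

definition orthonormal_family :: "(nat \<Rightarrow> complex^'n::finite) \<Rightarrow> nat \<Rightarrow> bool" where
  "orthonormal_family e d \<longleftrightarrow> (\<forall>a<d. \<forall>b<d. cinner (e a) (e b) = (if a = b then 1 else 0))"

definition span_projection :: "(nat \<Rightarrow> complex^'n::finite) \<Rightarrow> nat \<Rightarrow> 'n cop" where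
  "span_projection e d = (\<Sum>n<d. outer (e n) (e n))"

definition dephase :: "(nat \<Rightarrow> complex^'n::finite) \<Rightarrow> nat \<Rightarrow> 'n cop \<Rightarrow> 'n cop" where
  "dephase e d \<rho> = (\<Sum>n<d. outer (e n) (e n) ** \<rho> ** outer (e n) (e n))"

context
  fixes e :: "nat \<Rightarrow> complex^'n::finite" and d :: nat
  assumes onb: "orthonormal_family e d"
begin

lemma outer_basis_mult:
  assumes "a < d" and "b < d"
  shows "outer (e a) (e a) ** outer (e b) (e b) = (if a = b then outer (e a) (e a) else 0)"
  using onb assms by (simp add: orthonormal_family_def outer_mult_outer)

lemma span_projection_mult_basis:
  assumes "n < d"
  shows "span_projection e d ** outer (e n) (e n) = outer (e n) (e n)"
    and "outer (e n) (e n) ** span_projection e d = outer (e n) (e n)"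
  using assms
  by (simp_all add: span_projection_def matrix_sum_ldistrib matrix_sum_rdistrib outer_basis_mult
      if_distrib if_distribR cong: if_cong)

lemma span_projection_fixes_span:
  assumes "w \<in> cspan_basis e d"
  shows "span_projection e d *v w = w"
proof -
  obtain c where w: "w = (\<Sum>k<d. (\<chi> i. c k * e k $ i))"
    using assms unfolding cspan_basis_def by blast
  have "cinner (e n) w = c n" if "n < d" for n
  proof -
    have "cinner (e n) w = (\<Sum>k<d. c k * cinner (e n) (e k))"
      by (simp add: w cinner_sum_right cinner_scale_right)
    also have "\<dots> = (\<Sum>k<d. if k = n then c k else 0)"
      using onb that by (intro sum.cong) (auto simp: orthonormal_family_def)
    finally show ?thesis using that by simp
  qed
  then have "span_projection e d *v w = (\<Sum>n<d. (\<chi> i. c n * e n $ i))"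
    by (simp add: span_projection_def matrix_vector_mult_sum_left outer_mult_vector)
  then show ?thesis using w by simp
qed

lemma basis_projection_density:
  assumes "n < d"
  shows "outer (e n) (e n) \<in> density_ops"
proof -
  have "cinner v (outer (e n) (e n) *v v) = complex_of_real ((cmod (cinner v (e n)))\<^sup>2)" for v
    by (simp only: cinner_outer_self complex_norm_square)
  then have "psd (outer (e n) (e n))" by (simp add: psd_def)
  moreover have "trace (outer (e n) (e n)) = cinner (e n) (e n)"
    by (simp add: trace_def outer_def cinner_def mult.commute)
  ultimately show ?thesis
    using onb assms
    by (simp add: density_ops_def hermitian_def adj_outer orthonormal_family_def)
qed

lemma basis_projection_supported:
  assumes "n < d"
  shows "supported_on (outer (e n) (e n)) (cspan_basis e d)"
  unfolding supported_on_def cspan_basis_def outer_mult_vector mem_Collect_eq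
proof
  fix v
  let ?c = "\<lambda>k. if k = n then cinner (e n) v else 0"
  show "\<exists>c. (\<chi> i. cinner (e n) v * e n $ i) = (\<Sum>k<d. \<chi> i. c k * e k $ i)"
    using assms by (intro exI[of _ ?c]) (simp add: vec_eq_iff if_distrib if_distribR cong: if_cong)
qed

lemma supported_density_span_projection:
  assumes "\<rho> \<in> density_ops" and "supported_on \<rho> (cspan_basis e d)"
  shows "span_projection e d ** \<rho> = \<rho>" and "\<rho> ** span_projection e d = \<rho>"
proof -
  show left: "span_projection e d ** \<rho> = \<rho>"
    unfolding matrix_eq matrix_vector_mul_assoc[symmetric]
    using assms(2) span_projection_fixes_span by (simp add: supported_on_def)
  have "adj \<rho> = \<rho>" using assms(1) by (simp add: density_ops_def hermitian_def)
  moreover have "adj (span_projection e d) = span_projection e d"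
    by (simp add: span_projection_def adj_sum adj_outer)
  ultimately show "\<rho> ** span_projection e d = \<rho>"
    by (metis adj_matrix_mult left)
qed

lemma sum_dissip_basis_projections:
  assumes "span_projection e d ** \<rho> = \<rho>" and "\<rho> ** span_projection e d = \<rho>"
  shows "(\<Sum>n<d. dissip (outer (e n) (e n)) \<rho>) = dephase e d \<rho> - \<rho>"
proof -
  have "(\<Sum>n<d. dissip (outer (e n) (e n)) \<rho>)
      = dephase e d \<rho> - cscale (1/2) (span_projection e d ** \<rho> + \<rho> ** span_projection e d)"
    by (simp add: dissip_projection adj_outer outer_basis_mult dephase_def span_projection_def
        sum_subtractf cscale_sum cscale_add sum.distrib matrix_sum_ldistrib matrix_sum_rdistrib)
  then show ?thesis by (simp only: assms cscale_half_double)
qed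

lemma span_projection_sandwich_dephase:
  assumes "span_projection e d ** \<rho> = \<rho>" and "\<rho> ** span_projection e d = \<rho>"
  shows "span_projection e d ** (dephase e d \<rho> - \<rho>) ** span_projection e d = dephase e d \<rho> - \<rho>"
proof -
  have "span_projection e d ** (outer (e n) (e n) ** \<rho> ** outer (e n) (e n)) ** span_projection e d
      = outer (e n) (e n) ** \<rho> ** outer (e n) (e n)" if "n < d" for n
    using span_projection_mult_basis[OF that] by (metis matrix_mul_assoc)
  then have "span_projection e d ** dephase e d \<rho> ** span_projection e d = dephase e d \<rho>"
    by (simp add: dephase_def matrix_sum_ldistrib matrix_sum_rdistrib)
  then show ?thesis
    using assms by (simp add: matrix_diff_ldistrib matrix_diff_rdistrib)
qed

lemma kraus_fixes_dephase:
  assumes "\<And>n. n < d \<Longrightarrow> kraus I M (outer (e n) (e n)) = outer (e n) (e n)"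
  shows "kraus I M (dephase e d \<rho>) = dephase e d \<rho>"
  using assms by (simp add: dephase_def outer_sandwich kraus_sum kraus_cscale)

end

lemma first_order_effective_generator:
  fixes e :: "nat \<Rightarrow> complex^'n::finite"
  assumes L0_lindblad: "is_lindblad L0"
    and limit: "\<forall>\<rho>\<in>density_ops. ((\<lambda>t. evol L0 t \<rho>) \<longlongrightarrow> kraus I M \<rho>) at_top"
    and onb: "orthonormal_family e d"
    and steady: "{\<rho>\<in>density_ops. L0 \<rho> = 0}
                 = {\<rho>\<in>density_ops. supported_on \<rho> (cspan_basis e d)}"
    and \<rho>: "\<rho> \<in> density_ops" "L0 \<rho> = 0"
  shows "span_projection e d
           ** kraus I M (\<Sum>n<d. dissip (outer (e n) (e n))
                                 (span_projection e d ** \<rho> ** span_projection e d))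
           ** span_projection e d
       = (\<Sum>n<d. \<Sum>m<d. cscale (complex_of_real (\<Sum>\<mu>\<in>I. (cmod (cinner (e n) (M \<mu> *v e m)))\<^sup>2))
                             (dissip (outer (e n) (e m)) \<rho>))"
    (is "?lhs = ?rhs")
proof -
  have fixes_steady: "kraus I M \<sigma> = \<sigma>" if "\<sigma> \<in> density_ops" "L0 \<sigma> = 0" for \<sigma>
    using limit_kraus_fixes_steady_state[OF L0_lindblad] limit that by blast
  have fixes_basis: "kraus I M (outer (e n) (e n)) = outer (e n) (e n)" if "n < d" for n
    using fixes_steady steady basis_projection_density[OF onb that]
      basis_projection_supported[OF onb that] by blast
  have P0\<rho>: "span_projection e d ** \<rho> = \<rho>" and \<rho>P0: "\<rho> ** span_projection e d = \<rho>"
    using supported_density_span_projection[OF onb \<rho>(1)] \<rho> steady by blast+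
  have rates: "complex_of_real (\<Sum>\<mu>\<in>I. (cmod (cinner (e n) (M \<mu> *v e m)))\<^sup>2) = (if n = m then 1 else 0)"
    if "n < d" "m < d" for n m
    unfolding kraus_outer_diagonal fixes_basis[OF \<open>m < d\<close>]
    using onb that by (simp add: outer_mult_vector cinner_scale_right orthonormal_family_def)
  have "?lhs = span_projection e d ** kraus I M (dephase e d \<rho> - \<rho>) ** span_projection e d"
    by (simp only: P0\<rho> \<rho>P0 sum_dissip_basis_projections[OF onb P0\<rho> \<rho>P0])
  also have "\<dots> = dephase e d \<rho> - \<rho>"
    by (simp add: kraus_diff kraus_fixes_dephase[OF onb fixes_basis] fixes_steady \<rho>
        span_projection_sandwich_dephase[OF onb P0\<rho> \<rho>P0])
  also have "\<dots> = (\<Sum>n<d. dissip (outer (e n) (e n)) \<rho>)"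
    by (rule sum_dissip_basis_projections[OF onb P0\<rho> \<rho>P0, symmetric])
  also have "\<dots> = ?rhs"
    by (rule sum_kronecker_cscale[symmetric]) (rule rates)
  finally show ?thesis .
qed

theorem proposition1:
  fixes L0 :: "'n::finite cop \<Rightarrow> 'n cop"
    and I :: "'i set" and M :: "'i \<Rightarrow> 'n cop"
    and e :: "nat \<Rightarrow> complex^'n" and d :: nat
  assumes L0_lindblad: "is_lindblad L0"
    and I_fin: "finite I"
    and kraus_id: "(\<Sum>\<mu>\<in>I. adj (M \<mu>) ** M \<mu>) = mat 1"
    and limit: "\<forall>\<rho>\<in>density_ops. ((\<lambda>t. evol L0 t \<rho>) \<longlongrightarrow> kraus I M \<rho>) at_top"
    and onb: "\<forall>a<d. \<forall>b<d. cinner (e a) (e b) = (if a = b then 1 else 0)"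
    and steady: "{\<rho>\<in>density_ops. L0 \<rho> = 0}
                 = {\<rho>\<in>density_ops. supported_on \<rho> (cspan_basis e d)}"
  shows "\<forall>\<rho>e\<in>{\<rho>\<in>density_ops. L0 \<rho> = 0}.
     (let P = (\<lambda>n. outer (e n) (e n));
          P0 = (\<Sum>n<d. P n);
          K0 = (\<lambda>\<rho>. P0 ** \<rho> ** P0);
          L1 = (\<lambda>\<rho>. \<Sum>n<d. P n ** \<rho> ** adj (P n)
                   - cscale (1/2) (adj (P n) ** P n ** \<rho>)
                   - cscale (1/2) (\<rho> ** adj (P n) ** P n));
          R = (\<lambda>n m. outer (e n) (e m));
          \<kappa> = (\<lambda>n m. \<Sum>\<mu>\<in>I. (cmod (cinner (e n) (M \<mu> *v e m)))\<^sup>2)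
      in K0 (kraus I M (L1 (K0 \<rho>e)))
         = (\<Sum>n<d. \<Sum>m<d. cscale (complex_of_real (\<kappa> n m))
              (R n m ** \<rho>e ** adj (R n m)
               - cscale (1/2) (adj (R n m) ** R n m ** \<rho>e)
               - cscale (1/2) (\<rho>e ** adj (R n m) ** R n m))))"
  using first_order_effective_generator[OF L0_lindblad limit _ steady] onb
  unfolding Let_def dissip_split[symmetric] span_projection_def[symmetric] orthonormal_family_def
  by blast

end
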